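(* The Hilbert series of the coordinate ring of the cone of ${\mathrm{SO}}(4)$ is \[\mathrm{H}(\mathcal{O}(\mathcal{C}({\mathrm{SO}}(4)));t)=\frac{1+9t+9t^2+t^3}{(1-t)^7}.\]
   Context: ${\mathrm{SO}}(4)=\{M\in\mathbb{C}^{4\times4}\mid M^TM=I,\ \det M=1\}$. The cone $\mathcal{C}({\mathrm{SO}}(4))$ is the Zariski closure in $\mathbb{C}^{4\times 4}$ of $\{cM\mid c\in\mathbb{C},M\in{\mathrm{SO}}(4)\}$; its coordinate ring is the quotient of the standard graded polynomial ring $\mathbb{C}[x_{ij}\mid1\le i,j\le4]$ by the homogeneous vanishing ideal, with the induced grading. The Hilbert series of a graded algebra $A=\bigoplus_dA_d$ is $\sum_d\dim_{\mathbb{C}}(A_d)t^d$. *)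

theory Defs
  imports "HOL-Analysis.Analysis" "HOL-Library.Function_Algebras"
    "HOL-Computational_Algebra.Formal_Power_Series" "HOL-Library.Numeral_Type"
begin

definition SO4 :: "(complex^4^4) set" where
  "SO4 = {M. transpose M ** M = mat 1 \<and> det M = 1}"

text \<open>The set of scalar multiples c M, M in SO(4); its Zariski closure is the cone.\<close>
definition cone_SO4_pts :: "(complex^4^4) set" where
  "cone_SO4_pts = {(\<chi> i j. c * M $ i $ j) | c M. M \<in> SO4}"

definition monomials_deg :: "nat \<Rightarrow> (4 \<times> 4 \<Rightarrow> nat) set" where
  "monomials_deg d = {\<alpha>. (\<Sum>p\<in>UNIV. \<alpha> p) = d}"

definition mono_fun_on :: "(complex^4^4) set \<Rightarrow> (4 \<times> 4 \<Rightarrow> nat) \<Rightarrow> (complex^4^4 \<Rightarrow> complex)" where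
  "mono_fun_on S \<alpha> = (\<lambda>M. if M \<in> S then (\<Prod>(i,j)\<in>UNIV. (M $ i $ j) ^ \<alpha> (i,j)) else 0)"

text \<open>Degree d part of the coordinate ring of the Zariski closure of S (S closed under
  scaling, so the vanishing ideal is homogeneous): homogeneous degree d polynomials modulo
  those vanishing on S (= vanishing on its Zariski closure). Its dimension is the dimension
  of the space of restrictions to S of the degree d monomials.\<close>
definition hilbert_fun :: "(complex^4^4) set \<Rightarrow> nat \<Rightarrow> nat" where
  "hilbert_fun S d = vector_space.dim (\<lambda>(c::complex) f x. c * f x)
      (mono_fun_on S ` monomials_deg d)"

definition hilbert_series :: "(complex^4^4) set \<Rightarrow> rat fps" where
  "hilbert_series S = Abs_fps (\<lambda>d. of_nat (hilbert_fun S d))"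

end

theory Submission
  imports Defs "HOL-Library.Multiset" "HOL-Computational_Algebra.Polynomial"
begin

(* Conjugation by the matrix quat turns the form x1^2 + ... + x4^2 into the determinant of a
   2x2 matrix, so C^4 = C^2 (x) C^2 and the form vanishes exactly on the pure tensors u (x) v.
   An element of SO(4) then preserves the determinant form; its columns are isotropic, hence pure
   tensors, and the orthogonality relations force them into the Kronecker pattern of some A (x) B,
   or of A (x) B followed by the swap of the tensor factors, which has determinant -1.  So in the
   new coordinates the cone consists of Kronecker products, and conversely every A (x) B with
   det A det B \<noteq> 0 lies on it: it is the affine cone over the Segre embedding of
   P^3 x P^3.  A degree d monomial restricted to the cone depends only on its two marginal
   exponent vectors on the 2x2 factors, and distinct marginals give linearly independent
   functions, as one sees along a curve of Kronecker products with entries t^(B^k).  Hence the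
   Hilbert function is binomial(d + 3, 3)^2, whose generating function is
   (1 + 9t + 9t^2 + t^3) / (1 - t)^7. *)

section \<open>Spans of polynomial functions\<close>

(* The space of all complex-valued functions; hilbert_fun is a dimension in this space. *)
interpretation fun_vs: vector_space "\<lambda>(c::complex) (f::'a \<Rightarrow> complex) x. c * f x"
  by unfold_locales (auto simp: fun_eq_iff algebra_simps)

lemma sum_fun_apply: "(\<Sum>a\<in>A. f a) x = (\<Sum>a\<in>A. f a x)"
  by (induction A rule: infinite_finite_induct) auto

lemma fun_vs_span_image:
  fixes L :: "('a \<Rightarrow> complex) \<Rightarrow> ('b \<Rightarrow> complex)"
  assumes "\<And>f g. L (f + g) = L f + L g" "\<And>c f. L (\<lambda>x. c * f x) = (\<lambda>x. c * L f x)"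
  shows "fun_vs.span (L ` A) = L ` fun_vs.span A"
proof (rule module_hom.span_image)
  show "module_hom (\<lambda>(c::complex) (f::'a \<Rightarrow> complex) x. c * f x) (\<lambda>c f x. c * f x) L"
    using assms by (simp add: Vector_Spaces.linear_iff fun_vs.vector_space_axioms
        flip: Vector_Spaces.linear_iff_module_hom)
qed

lemma fun_vs_span_mult:
  assumes "f \<in> fun_vs.span A" "g \<in> fun_vs.span B"
    and "\<And>a b. a \<in> A \<Longrightarrow> b \<in> B \<Longrightarrow> (\<lambda>x. a x * b x) \<in> fun_vs.span C"
  shows "(\<lambda>x. f x * g x) \<in> fun_vs.span C"
proof -
  have mult_span: "(\<lambda>x. h x * k x) \<in> fun_vs.span ((\<lambda>k x. h x * k x) ` K)"
    if "k \<in> fun_vs.span K" for h k and K :: "('a \<Rightarrow> complex) set"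
  proof -
    have "fun_vs.span ((\<lambda>k x. h x * k x) ` K) = (\<lambda>k x. h x * k x) ` fun_vs.span K"
      by (rule fun_vs_span_image) (auto simp: fun_eq_iff algebra_simps)
    then show ?thesis
      using that by simp
  qed
  have "(\<lambda>x. f x * b x) \<in> fun_vs.span C" if b: "b \<in> B" for b
  proof -
    have "(\<lambda>a x. b x * a x) ` A \<subseteq> fun_vs.span C"
      using assms(3) b by (auto simp: mult.commute intro: fun_vs.span_base)
    then have "fun_vs.span ((\<lambda>a x. b x * a x) ` A) \<subseteq> fun_vs.span C"
      by (intro fun_vs.span_minimal fun_vs.subspace_span)
    with mult_span[OF assms(1), of b] show ?thesis
      by (auto simp: mult.commute)
  qed
  then have "fun_vs.span ((\<lambda>b x. f x * b x) ` B) \<subseteq> fun_vs.span C"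
    by (intro fun_vs.span_minimal fun_vs.subspace_span) auto
  with mult_span[OF assms(2)] show ?thesis by blast
qed

definition restrict0 :: "'a set \<Rightarrow> ('a \<Rightarrow> complex) \<Rightarrow> 'a \<Rightarrow> complex" where
  "restrict0 S f = (\<lambda>x. if x \<in> S then f x else 0)"

lemma fun_vs_span_restrict0:
  "fun_vs.span (restrict0 S ` A) = restrict0 S ` fun_vs.span A"
  by (rule fun_vs_span_image) (auto simp: restrict0_def fun_eq_iff)

definition exponents :: "nat \<Rightarrow> ('i::finite \<Rightarrow> nat) set" where
  "exponents d = {\<alpha>. sum \<alpha> UNIV = d}"

definition monomial :: "('i::finite \<Rightarrow> 'v \<Rightarrow> complex) \<Rightarrow> ('i \<Rightarrow> nat) \<Rightarrow> 'v \<Rightarrow> complex" where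
  "monomial x \<alpha> = (\<lambda>v. \<Prod>i\<in>UNIV. x i v ^ \<alpha> i)"

lemma sum_fun_upd_Suc:
  assumes "finite S"
  shows "sum (\<alpha>(i := Suc (\<alpha> i))) S = (if i \<in> S then Suc (sum \<alpha> S) else sum \<alpha> S)"
proof (cases "i \<in> S")
  case True
  with assms show ?thesis
    by (simp add: sum.remove[of S i])
next
  case False
  then show ?thesis
    by (auto intro: sum.cong)
qed

lemma monomial_fun_upd_Suc:
  "monomial x (\<alpha>(i := Suc (\<alpha> i))) = (\<lambda>v. x i v * monomial x \<alpha> v)"
  by (simp add: monomial_def fun_eq_iff prod.remove[of UNIV i] fun_upd_def)

lemma monomial_in_span_monomials:
  fixes x :: "'i::finite \<Rightarrow> 'v \<Rightarrow> complex" and y :: "'j::finite \<Rightarrow> 'v \<Rightarrow> complex"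
  assumes "range x \<subseteq> fun_vs.span (range y)" and "\<alpha> \<in> exponents d"
  shows "monomial x \<alpha> \<in> fun_vs.span (monomial y ` exponents d)"
  using assms(2)
proof (induction d arbitrary: \<alpha>)
  case 0
  then have "monomial x \<alpha> = monomial y 0"
    by (simp add: exponents_def monomial_def)
  moreover have "(0 :: 'j \<Rightarrow> nat) \<in> exponents 0"
    by (simp add: exponents_def)
  ultimately show ?case
    by (auto intro: fun_vs.span_base)
next
  case (Suc d)
  then have "\<alpha> \<noteq> 0"
    by (auto simp: exponents_def)
  then obtain i where "\<alpha> i > 0"
    by (auto simp: fun_eq_iff)
  then obtain \<alpha>' where \<alpha>: "\<alpha> = \<alpha>'(i := Suc (\<alpha>' i))"
    by (intro that[of "\<alpha>(i := \<alpha> i - 1)"]) (auto simp: fun_eq_iff)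
  have "\<alpha>' \<in> exponents d"
    using Suc.prems unfolding \<alpha> exponents_def mem_Collect_eq sum_fun_upd_Suc[OF finite] by simp
  have "(\<lambda>v. x i v * monomial x \<alpha>' v) \<in> fun_vs.span (monomial y ` exponents (Suc d))"
  proof (rule fun_vs_span_mult)
    show "x i \<in> fun_vs.span (range y)" using assms(1) by blast
    show "monomial x \<alpha>' \<in> fun_vs.span (monomial y ` exponents d)"
      by (rule Suc.IH) fact
  next
    fix a b assume "a \<in> range y" "b \<in> monomial y ` exponents d"
    then obtain j \<beta> where ab: "a = y j" "b = monomial y \<beta>" and "\<beta> \<in> exponents d" by blast
    then have "\<beta>(j := Suc (\<beta> j)) \<in> exponents (Suc d)"
      unfolding exponents_def mem_Collect_eq sum_fun_upd_Suc[OF finite] by simp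
    moreover have "(\<lambda>v. a v * b v) = monomial y (\<beta>(j := Suc (\<beta> j)))"
      by (simp add: ab monomial_fun_upd_Suc)
    ultimately show "(\<lambda>v. a v * b v) \<in> fun_vs.span (monomial y ` exponents (Suc d))"
      by (auto intro: fun_vs.span_base)
  qed
  then show ?case unfolding \<alpha> monomial_fun_upd_Suc .
qed

lemma fun_vs_span_restricted_monomials_eq:
  fixes x :: "'i::finite \<Rightarrow> 'v \<Rightarrow> complex" and y :: "'j::finite \<Rightarrow> 'v \<Rightarrow> complex"
  assumes "range x \<subseteq> fun_vs.span (range y)" "range y \<subseteq> fun_vs.span (range x)"
  shows "fun_vs.span (restrict0 S ` monomial x ` exponents d)
       = fun_vs.span (restrict0 S ` monomial y ` exponents d)"
proof -
  have "fun_vs.span (monomial x ` exponents d) = fun_vs.span (monomial y ` exponents d)"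
    using monomial_in_span_monomials[OF assms(1)] monomial_in_span_monomials[OF assms(2)]
    by (intro fun_vs.span_eq[THEN iffD2]) blast
  then show ?thesis by (simp add: fun_vs_span_restrict0)
qed

definition entry :: "'m \<times> 'n \<Rightarrow> 'a^'n^'m \<Rightarrow> 'a" where
  "entry p M = M $ fst p $ snd p"

lemma matrix_mult_entry_expand:
  fixes A :: "'a::comm_semiring_1^'m^'i" and M :: "'a^'n^'m" and B :: "'a^'j^'n"
  shows "(A ** M ** B) $ i $ j = (\<Sum>p\<in>UNIV. A $ i $ fst p * B $ snd p $ j * entry p M)"
proof -
  have "(A ** M ** B) $ i $ j = (\<Sum>l\<in>UNIV. \<Sum>k\<in>UNIV. A $ i $ k * B $ l $ j * M $ k $ l)"
    by (simp add: matrix_matrix_mult_def sum_distrib_left sum_distrib_right mult_ac)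
  also have "\<dots> = (\<Sum>p\<in>UNIV. A $ i $ fst p * B $ snd p $ j * entry p M)"
    by (subst sum.swap) (simp add: sum.cartesian_product entry_def case_prod_unfold flip: UNIV_Times_UNIV)
  finally show ?thesis .
qed

lemma entry_matrix_mult_in_span:
  fixes F :: "'v \<Rightarrow> complex^'n^'m" and A :: "complex^'m^'i" and B :: "complex^'j^'n"
  shows "(\<lambda>v. entry q (A ** F v ** B)) \<in> fun_vs.span (range (\<lambda>p v. entry p (F v)))"
proof -
  have "(\<lambda>v. entry q (A ** F v ** B))
      = (\<Sum>p\<in>UNIV. (\<lambda>v. (A $ fst q $ fst p * B $ snd p $ snd q) * entry p (F v)))"
    by (simp add: fun_eq_iff sum_fun_apply entry_def[of q] matrix_mult_entry_expand)
  also have "\<dots> \<in> fun_vs.span (range (\<lambda>p v. entry p (F v)))"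
    by (intro fun_vs.span_sum fun_vs.span_scale fun_vs.span_base) auto
  finally show ?thesis .
qed

lemma mono_fun_on_eq_restrict0_monomial: "mono_fun_on S \<alpha> = restrict0 S (monomial entry \<alpha>)"
  by (simp add: fun_eq_iff mono_fun_on_def restrict0_def monomial_def entry_def case_prod_unfold)

lemma hilbert_fun_conjugate_coordinates:
  assumes "P ** P' = mat 1" "P' ** P = mat 1"
  shows "hilbert_fun S d
       = fun_vs.dim (restrict0 S ` monomial (\<lambda>p M. entry p (P ** M ** P')) ` exponents d)"
proof -
  have "mono_fun_on S ` monomials_deg d = restrict0 S ` monomial entry ` exponents d"
    by (simp add: mono_fun_on_eq_restrict0_monomial monomials_deg_def exponents_def image_image)
  moreover have "range entry \<subseteq> fun_vs.span (range (\<lambda>p M. entry p (P ** M ** P')))"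
  proof -
    have "entry q = (\<lambda>M. entry q (P' ** (P ** M ** P') ** P))" for q
      by (simp add: matrix_mul_assoc assms) (simp add: matrix_mul_assoc[symmetric] assms)
    then show ?thesis
      using entry_matrix_mult_in_span[of q P' "\<lambda>M. P ** M ** P'" P for q] by auto
  qed
  moreover have "range (\<lambda>p M. entry p (P ** M ** P')) \<subseteq> fun_vs.span (range entry)"
    using entry_matrix_mult_in_span[of _ P "\<lambda>M. M" P'] by auto
  ultimately show ?thesis
    unfolding hilbert_fun_def
    by (metis fun_vs.dim_span fun_vs_span_restricted_monomials_eq)
qed

section \<open>Tensors of two-dimensional vectors\<close>

(* C^4 = C^2 (x) C^2: coordinate x is the pair (hi x, lo x), so a vector v of C^4 is the
   2x2 matrix with rows (v$1, v$2) and (v$3, v$4). *)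
definition hi :: "4 \<Rightarrow> 2" where
  "hi x = (if x = 1 \<or> x = 2 then 1 else 2)"

definition lo :: "4 \<Rightarrow> 2" where
  "lo x = (if x = 1 \<or> x = 3 then 1 else 2)"

lemma hi_simps [simp]: "hi 1 = 1" "hi 2 = 1" "hi 3 = 2" "hi 4 = 2"
  by (simp_all add: hi_def)

lemma lo_simps [simp]: "lo 1 = 1" "lo 2 = 2" "lo 3 = 1" "lo 4 = 2"
  by (simp_all add: lo_def)

definition tensor_index :: "2 \<Rightarrow> 2 \<Rightarrow> 4" where
  "tensor_index i k = (if i = 1 then if k = 1 then 1 else 2 else if k = 1 then 3 else 4)"

lemma hi_tensor_index: "hi (tensor_index i k) = i" and lo_tensor_index: "lo (tensor_index i k) = k"
  using exhaust_2[of i] exhaust_2[of k] by (auto simp: tensor_index_def)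

lemma tensor_index_hi_lo: "tensor_index (hi x) (lo x) = x"
  using exhaust_4[of x] by (auto simp: tensor_index_def)

lemma bij_hi_lo: "bij (\<lambda>p :: 4 \<times> 4. (map_prod hi hi p, map_prod lo lo p))"
proof (rule bij_betwI')
  show "\<And>p q. ((map_prod hi hi p, map_prod lo lo p) = (map_prod hi hi q, map_prod lo lo q)) = (p = q)"
    by (metis tensor_index_hi_lo map_prod_simp prod.collapse prod.inject)
  show "\<And>c. \<exists>p\<in>UNIV. c = (map_prod hi hi p, map_prod lo lo p)"
    by (metis UNIV_I hi_tensor_index lo_tensor_index map_prod_simp prod.collapse)
qed simp

definition tensor :: "complex^2 \<Rightarrow> complex^2 \<Rightarrow> complex^4" where
  "tensor u v = (\<chi> x. u $ hi x * v $ lo x)"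

definition kron :: "complex^2^2 \<Rightarrow> complex^2^2 \<Rightarrow> complex^4^4" where
  "kron A B = (\<chi> x y. A $ hi x $ hi y * B $ lo x $ lo y)"

definition cross2 :: "complex^2 \<Rightarrow> complex^2 \<Rightarrow> complex" where
  "cross2 u v = u $ 1 * v $ 2 - u $ 2 * v $ 1"

(* Polar form of the determinant of v read as a 2x2 matrix: polar v v = 2 (v1 v4 - v2 v3). *)
definition polar :: "complex^4 \<Rightarrow> complex^4 \<Rightarrow> complex" where
  "polar v w = v $ 1 * w $ 4 + v $ 4 * w $ 1 - v $ 2 * w $ 3 - v $ 3 * w $ 2"

lemma column_kron: "column y (kron A B) = tensor (column (hi y) A) (column (lo y) B)"
  by (simp add: column_def kron_def tensor_def)

lemma tensor_scale: "tensor (c *s u) (d *s v) = (c * d) *s tensor u v"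
  by (simp add: tensor_def vec_eq_iff)

lemma polar_tensor: "polar (tensor u v) (tensor u' v') = cross2 u u' * cross2 v v'"
  by (simp add: polar_def tensor_def cross2_def algebra_simps)

lemma polar_scale_right: "polar v (c *s w) = c * polar v w"
  by (simp add: polar_def algebra_simps)

lemma polar_scale_left: "polar (c *s v) w = c * polar v w"
  by (simp add: polar_def algebra_simps)

lemma cross2_commute: "cross2 v u = - cross2 u v"
  by (simp add: cross2_def)

lemma cross2_self [simp]: "cross2 u u = 0"
  by (simp add: cross2_def)

lemma nonzero_if_cross2_nonzero: "cross2 u v \<noteq> 0 \<Longrightarrow> u \<noteq> 0 \<and> v \<noteq> 0"
  by (auto simp: cross2_def)

lemma vec2_nonzero_cases:
  fixes a :: "complex^2"
  assumes "a \<noteq> 0"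
  obtains "a $ 1 \<noteq> 0" | "a $ 2 \<noteq> 0"
  using assms by (auto simp: vec_eq_iff forall_2)

lemma cross2_trans:
  assumes "cross2 u v = 0" "cross2 v w = 0" "v \<noteq> 0"
  shows "cross2 u w = 0"
proof -
  have "cross2 u w * v $ k = cross2 v w * u $ k + cross2 u v * w $ k" if "k = 1 \<or> k = 2" for k
    using that by (auto simp: cross2_def algebra_simps)
  with assms show ?thesis
    by (cases rule: vec2_nonzero_cases[OF assms(3)]) auto
qed

lemma cross2_eq_0_imp_scale:
  assumes "cross2 u a = 0" "a \<noteq> 0"
  obtains c where "u = c *s a"
proof (cases rule: vec2_nonzero_cases[OF assms(2)])
  case 1
  with assms(1) have "u = (u $ 1 / a $ 1) *s a"
    by (auto simp: vec_eq_iff forall_2 cross2_def field_simps)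
  then show ?thesis by (rule that)
next
  case 2
  with assms(1) have "u = (u $ 2 / a $ 2) *s a"
    by (auto simp: vec_eq_iff forall_2 cross2_def field_simps)
  then show ?thesis by (rule that)
qed

lemma tensor_eq_scale_if_parallel:
  assumes "cross2 u a = 0" "a \<noteq> 0" "cross2 v b = 0" "b \<noteq> 0"
  obtains c where "tensor u v = c *s tensor a b"
proof -
  obtain c d where "u = c *s a" "v = d *s b"
    using cross2_eq_0_imp_scale assms by metis
  then show ?thesis
    using that[of "c * d"] by (simp add: tensor_scale)
qed

lemma isotropic_imp_tensor:
  assumes "polar w w = 0"
  obtains u v where "w = tensor u v"
proof (cases "w $ 1 = 0 \<and> w $ 2 = 0")
  case True
  then have "w = tensor (vector [0, 1]) (vector [w $ 3, w $ 4])"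
    by (auto simp: vec_eq_iff forall_4 tensor_def)
  then show ?thesis by (rule that)
next
  case False
  define c where "c = (if w $ 1 \<noteq> 0 then w $ 3 / w $ 1 else w $ 4 / w $ 2)"
  from assms have "w $ 1 * w $ 4 = w $ 2 * w $ 3"
    by (simp add: polar_def)
  with False have "w = tensor (vector [1, c]) (vector [w $ 1, w $ 2])"
    by (auto simp: vec_eq_iff forall_4 tensor_def c_def field_simps)
  then show ?thesis by (rule that)
qed

lemma matrix_eqI_columns: "(\<And>y. column y M = column y N) \<Longrightarrow> M = N"
  by (simp add: vec_eq_iff column_def)

lemma parallel_pattern_if_tensor_columns:
  assumes cols: "\<And>y. column y N = tensor (u y) (v y)"
    and pol: "polar (column 1 N) (column 4 N) = 1" "polar (column 2 N) (column 3 N) = -1"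
      "polar (column 1 N) (column 3 N) = 0" "polar (column 2 N) (column 4 N) = 0"
      "polar (column 3 N) (column 4 N) = 0"
    and u12: "cross2 (u 1) (u 2) = 0"
  shows "cross2 (u 3) (u 4) = 0" "cross2 (v 1) (v 3) = 0" "cross2 (v 2) (v 4) = 0"
proof -
  note pol = pol[unfolded cols polar_tensor]
  (* Each vanishing polar product kills one of two cross products; the nonvanishing ones,
     through cross2_trans, decide which. *)
  have nz14: "cross2 (u 1) (u 4) \<noteq> 0" "cross2 (v 1) (v 4) \<noteq> 0"
    and nz23: "cross2 (u 2) (u 3) \<noteq> 0" "cross2 (v 2) (v 3) \<noteq> 0"
    using pol(1,2) by auto
  have "cross2 (u 1) (u 3) \<noteq> 0"
    using cross2_trans[of "u 2" "u 1" "u 3"] u12 nz14 nz23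
    by (auto simp: cross2_commute[of "u 2"] dest: nonzero_if_cross2_nonzero)
  then show v13: "cross2 (v 1) (v 3) = 0"
    using pol(3) by simp
  have "cross2 (u 2) (u 4) \<noteq> 0"
    using cross2_trans[of "u 1" "u 2" "u 4"] u12 nz14 nz23
    by (auto dest: nonzero_if_cross2_nonzero)
  then show "cross2 (v 2) (v 4) = 0"
    using pol(4) by simp
  have "cross2 (v 3) (v 4) \<noteq> 0"
    using cross2_trans[of "v 1" "v 3" "v 4"] v13 nz14 nz23
    by (auto dest: nonzero_if_cross2_nonzero)
  then show "cross2 (u 3) (u 4) = 0"
    using pol(5) by simp
qed

lemma kron_if_tensor_columns:
  assumes cols: "\<And>y. column y N = tensor (u y) (v y)"
    and par: "cross2 (u 1) (u 2) = 0" "cross2 (u 3) (u 4) = 0"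
      "cross2 (v 1) (v 3) = 0" "cross2 (v 2) (v 4) = 0"
    and pol: "polar (column 1 N) (column 4 N) = 1" "polar (column 2 N) (column 3 N) = -1"
  obtains A B where "N = kron A B"
proof -
  have "cross2 (u 1) (u 4) * cross2 (v 1) (v 4) \<noteq> 0" "cross2 (u 2) (u 3) * cross2 (v 2) (v 3) \<noteq> 0"
    using pol by (simp_all add: cols polar_tensor)
  then have nz: "u 1 \<noteq> 0" "v 1 \<noteq> 0" "u 3 \<noteq> 0" "v 2 \<noteq> 0"
    by (auto dest: nonzero_if_cross2_nonzero)
  obtain c2 where n2: "column 2 N = c2 *s tensor (u 1) (v 2)"
    using tensor_eq_scale_if_parallel[of "u 2" "u 1" "v 2" "v 2"] par(1) nz
    by (metis cols cross2_commute cross2_self neg_equal_0_iff_equal)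
  obtain c3 where n3: "column 3 N = c3 *s tensor (u 3) (v 1)"
    using tensor_eq_scale_if_parallel[of "u 3" "u 3" "v 3" "v 1"] par(3) nz
    by (metis cols cross2_commute cross2_self neg_equal_0_iff_equal)
  obtain c4 where n4: "column 4 N = c4 *s tensor (u 3) (v 2)"
    using tensor_eq_scale_if_parallel[of "u 4" "u 3" "v 4" "v 2"] par(2,4) nz
    by (metis cols cross2_commute neg_equal_0_iff_equal)
  define D where "D = cross2 (u 1) (u 3) * cross2 (v 1) (v 2)"
  have "c4 * D = 1"
    using pol(1) by (simp add: cols[of 1] n4 polar_scale_right polar_tensor D_def)
  moreover have "c2 * c3 * D = 1"
    using pol(2) by (simp add: n2 n3 polar_scale_left polar_scale_right polar_tensor D_def
        cross2_commute[of "v 2"] algebra_simps)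
  ultimately have c4: "c4 = c2 * c3"
    by (metis mult_cancel_right mult_eq_0_iff zero_neq_one)
  define A :: "complex^2^2" where "A = (\<chi> i j. if j = 1 then u 1 $ i else c3 * u 3 $ i)"
  define B :: "complex^2^2" where "B = (\<chi> i j. if j = 1 then v 1 $ i else c2 * v 2 $ i)"
  have "column y N = column y (kron A B)" for y
    using exhaust_4[of y] cols[of 1] n2 n3 n4
    by (auto simp: kron_def A_def B_def column_def tensor_def vec_eq_iff c4)
  then show ?thesis
    using that matrix_eqI_columns by blast
qed

section \<open>Linear maps preserving the determinant form\<close>

lemma det_4:
  "det (A::'a::comm_ring_1^4^4) =
     A$1$1 * A$2$2 * A$3$3 * A$4$4 - A$1$1 * A$2$2 * A$3$4 * A$4$3 - A$1$1 * A$2$3 * A$3$2 * A$4$4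
     + A$1$1 * A$2$3 * A$3$4 * A$4$2 + A$1$1 * A$2$4 * A$3$2 * A$4$3 - A$1$1 * A$2$4 * A$3$3 * A$4$2
     - A$1$2 * A$2$1 * A$3$3 * A$4$4 + A$1$2 * A$2$1 * A$3$4 * A$4$3 + A$1$2 * A$2$3 * A$3$1 * A$4$4
     - A$1$2 * A$2$3 * A$3$4 * A$4$1 - A$1$2 * A$2$4 * A$3$1 * A$4$3 + A$1$2 * A$2$4 * A$3$3 * A$4$1
     + A$1$3 * A$2$1 * A$3$2 * A$4$4 - A$1$3 * A$2$1 * A$3$4 * A$4$2 - A$1$3 * A$2$2 * A$3$1 * A$4$4
     + A$1$3 * A$2$2 * A$3$4 * A$4$1 + A$1$3 * A$2$4 * A$3$1 * A$4$2 - A$1$3 * A$2$4 * A$3$2 * A$4$1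
     - A$1$4 * A$2$1 * A$3$2 * A$4$3 + A$1$4 * A$2$1 * A$3$3 * A$4$2 + A$1$4 * A$2$2 * A$3$1 * A$4$3
     - A$1$4 * A$2$2 * A$3$3 * A$4$1 - A$1$4 * A$2$3 * A$3$1 * A$4$2 + A$1$4 * A$2$3 * A$3$2 * A$4$1"
proof -
  have f1: "finite {2::4, 3, 4}" "1 \<notin> {2::4, 3, 4}"
    and f2: "finite {3::4, 4}" "2 \<notin> {3::4, 4}"
    and f3: "finite {4::4}" "3 \<notin> {4::4}"
    by auto
  show ?thesis
    unfolding det_def UNIV_4 sum_over_permutations_insert[OF f1]
      sum_over_permutations_insert[OF f2] sum_over_permutations_insert[OF f3] permutes_sing
    by (simp add: sign_swap_id permutation_swap_id sign_compose swap_id_eq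
        permutation_compose algebra_simps)
qed

(* The Gram matrix of polar / 2, so Q_orthogonal N says that N preserves the determinant form. *)
definition Qform :: "complex^4^4" where
  "Qform = (\<chi> i j. polar (axis i 1) (axis j 1) / 2)"

definition Q_orthogonal :: "complex^4^4 \<Rightarrow> bool" where
  "Q_orthogonal N \<longleftrightarrow> transpose N ** Qform ** N = Qform"

lemma transpose_Qform_mult_entry:
  "(transpose M ** Qform ** N) $ i $ j = polar (column i M) (column j N) / 2"
  by (simp add: matrix_matrix_mult_def transpose_def sum_4 Qform_def polar_def axis_def
      column_def field_simps)

lemma Q_orthogonal_iff_polar:
  "Q_orthogonal N \<longleftrightarrow> (\<forall>i j. polar (column i N) (column j N) = polar (axis i 1) (axis j 1))"
  unfolding Q_orthogonal_def vec_eq_iff transpose_Qform_mult_entry by (simp add: Qform_def)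

lemma polar_axis:
  "polar (axis 1 1) (axis 4 1) = 1" "polar (axis 2 1) (axis 3 1) = -1"
  "polar (axis 1 1) (axis 2 1) = 0" "polar (axis 1 1) (axis 3 1) = 0"
  "polar (axis 2 1) (axis 4 1) = 0" "polar (axis 3 1) (axis 4 1) = 0"
  "polar (axis i 1) (axis i 1) = 0"
  using exhaust_4[of i] by (auto simp: polar_def axis_def)

lemma Q_orthogonal_imp_tensor_columns:
  assumes "Q_orthogonal N"
  obtains u v where "\<And>y. column y N = tensor (u y) (v y)"
proof -
  have "\<forall>y. \<exists>uv. column y N = tensor (fst uv) (snd uv)"
    using assms isotropic_imp_tensor
    by (metis Q_orthogonal_iff_polar polar_axis(7) fst_conv snd_conv)
  then obtain uv where "\<And>y. column y N = tensor (fst (uv y)) (snd (uv y))"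
    by metis
  then show ?thesis by (rule that)
qed

lemma kron_if_Q_orthogonal:
  assumes orth: "Q_orthogonal N"
    and cols: "\<And>y. column y N = tensor (u y) (v y)"
    and u12: "cross2 (u 1) (u 2) = 0"
  obtains A B where "N = kron A B"
proof -
  have pol: "polar (column 1 N) (column 4 N) = 1" "polar (column 2 N) (column 3 N) = -1"
    "polar (column 1 N) (column 3 N) = 0" "polar (column 2 N) (column 4 N) = 0"
    "polar (column 3 N) (column 4 N) = 0"
    using orth by (simp_all add: Q_orthogonal_iff_polar polar_axis)
  show ?thesis
    using kron_if_tensor_columns[OF cols u12 parallel_pattern_if_tensor_columns[OF cols pol u12]
        pol(1,2)] that .
qed

lemma det_kron: "det (kron A B) = (det A * det B)\<^sup>2"
  unfolding det_4 det_2 by (simp add: kron_def) algebra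

lemma polar_kron_columns_1_4: "polar (column 1 (kron A B)) (column 4 (kron A B)) = det A * det B"
  unfolding column_kron polar_tensor by (simp add: cross2_def det_2 column_def mult.commute)

lemma cross2_columns: "cross2 (column k A) (column l A) = det A * cross2 (axis k 1) (axis l 1)"
  using exhaust_2[of k] exhaust_2[of l] by (auto simp: cross2_def det_2 column_def axis_def)

lemma axis_eq_tensor: "axis x 1 = tensor (axis (hi x) 1) (axis (lo x) 1)"
  using exhaust_4[of x] by (auto simp: vec_eq_iff forall_4 tensor_def axis_def)

lemma polar_axis_eq_cross2:
  "polar (axis x 1) (axis y 1) = cross2 (axis (hi x) 1) (axis (hi y) 1) * cross2 (axis (lo x) 1) (axis (lo y) 1)"
  by (subst (1 2) axis_eq_tensor) (rule polar_tensor)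

lemma transpose_kron_Qform_kron:
  "transpose (kron A B) ** Qform ** kron A B = (\<chi> i j. det A * det B * Qform $ i $ j)"
  by (simp add: vec_eq_iff transpose_Qform_mult_entry column_kron polar_tensor cross2_columns)
     (simp add: Qform_def polar_axis_eq_cross2)

lemma hi_lo_transpose_2_3:
  "hi (Transposition.transpose 2 3 x) = lo x" "lo (Transposition.transpose 2 3 x) = hi x"
  using exhaust_4[of x] by (auto simp: Transposition.transpose_def)

lemma Q_orthogonal_det_1_imp_kron:
  assumes orth: "Q_orthogonal N" and det: "det N = 1"
  obtains A B where "N = kron A B"
proof -
  obtain u v where cols: "\<And>y. column y N = tensor (u y) (v y)"
    using Q_orthogonal_imp_tensor_columns[OF orth] by blast
  have polar_N: "polar (column i N) (column j N) = polar (axis i 1) (axis j 1)" for i j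
    using orth by (simp add: Q_orthogonal_iff_polar)
  have "cross2 (u 1) (u 2) * cross2 (v 1) (v 2) = 0"
    using polar_N[of 1 2] by (simp add: cols polar_tensor polar_axis)
  then consider "cross2 (u 1) (u 2) = 0" | "cross2 (v 1) (v 2) = 0"
    by auto
  then show ?thesis
  proof cases
    case 1
    then show ?thesis
      using kron_if_Q_orthogonal[OF orth cols] that by blast
  next
    case 2
    (* Exchanging coordinates 2 and 3 swaps the tensor factors and negates the determinant. *)
    define N' where "N' = (\<chi> i. N $ Transposition.transpose 2 3 i)"
    have cols': "column y N' = tensor (v y) (u y)" for y
      using cols[of y] by (simp add: N'_def column_def tensor_def vec_eq_iff hi_lo_transpose_2_3 mult.commute)
    have "polar (column i N') (column j N') = polar (column i N) (column j N)" for i j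
      by (simp add: cols cols' polar_tensor mult.commute)
    then have orth': "Q_orthogonal N'"
      using orth by (simp add: Q_orthogonal_iff_polar)
    obtain A B where N': "N' = kron A B"
      using kron_if_Q_orthogonal[OF orth' cols' 2] by blast
    have "det A * det B = 1"
      using orth' by (simp add: Q_orthogonal_iff_polar polar_axis flip: polar_kron_columns_1_4 N')
    then have "det N' = 1"
      by (simp add: N' det_kron)
    moreover have "det N' = - det N"
      unfolding N'_def by (simp add: det_permute_rows permutes_swap_id sign_swap_id)
    ultimately show ?thesis
      using det by simp
  qed
qed

section \<open>The cone over SO(4) consists of Kronecker products\<close>

lemma vector_4 [simp]:
  "(vector [a, b, c, d] :: 'a::zero^4) $ 1 = a" "(vector [a, b, c, d] :: 'a^4) $ 2 = b"
  "(vector [a, b, c, d] :: 'a^4) $ 3 = c" "(vector [a, b, c, d] :: 'a^4) $ 4 = d"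
  unfolding vector_def by simp_all

(* quat sends x to the 2x2 matrix with rows (x1 + i x2, x3 + i x4) and (-x3 + i x4, x1 - i x2),
   whose determinant is x1^2 + x2^2 + x3^2 + x4^2. *)
definition quat :: "complex^4^4" where
  "quat = vector [vector [1, \<i>, 0, 0], vector [0, 0, 1, \<i>], vector [0, 0, -1, \<i>], vector [1, -\<i>, 0, 0]]"

definition quat_inv :: "complex^4^4" where
  "quat_inv = vector [vector [1/2, 0, 0, 1/2], vector [-\<i>/2, 0, 0, \<i>/2],
                      vector [0, 1/2, -1/2, 0], vector [0, -\<i>/2, -\<i>/2, 0]]"

lemma quat_mult_quat_inv: "quat ** quat_inv = mat 1"
  by (simp add: vec_eq_iff forall_4 matrix_matrix_mult_def sum_4 quat_def quat_inv_def mat_def)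

lemma quat_inv_mult_quat: "quat_inv ** quat = mat 1"
  using quat_mult_quat_inv matrix_left_right_inverse by blast

lemma transpose_quat_Qform_quat: "transpose quat ** Qform ** quat = mat 1"
  by (simp add: vec_eq_iff forall_4 transpose_Qform_mult_entry polar_def column_def quat_def mat_def)

lemma Qform_eq: "Qform = transpose quat_inv ** quat_inv"
proof -
  have "transpose quat_inv ** transpose quat = mat 1"
    by (simp flip: matrix_transpose_mul add: quat_mult_quat_inv transpose_mat)
  then have "Qform = (transpose quat_inv ** transpose quat) ** Qform ** (quat ** quat_inv)"
    by (simp add: quat_mult_quat_inv)
  also have "\<dots> = transpose quat_inv ** (transpose quat ** Qform ** quat) ** quat_inv"
    by (simp add: matrix_mul_assoc)
  finally show ?thesis
    by (simp add: transpose_quat_Qform_quat)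
qed

lemma Q_orthogonal_quat_conj:
  assumes "transpose M ** M = mat 1"
  shows "Q_orthogonal (quat ** M ** quat_inv)"
proof -
  have "transpose (quat ** M ** quat_inv) ** Qform ** (quat ** M ** quat_inv)
      = transpose quat_inv ** transpose M ** (transpose quat ** Qform ** quat) ** M ** quat_inv"
    by (simp add: matrix_transpose_mul matrix_mul_assoc)
  also have "\<dots> = transpose quat_inv ** (transpose M ** M) ** quat_inv"
    by (simp add: transpose_quat_Qform_quat matrix_mul_assoc)
  also have "\<dots> = Qform"
    by (simp add: assms Qform_eq)
  finally show ?thesis
    by (simp add: Q_orthogonal_def)
qed

lemma det_quat_conj: "det (quat ** M ** quat_inv) = det M"
  using quat_inv_mult_quat by (simp add: det_mul) (metis det_I det_mul mult.commute)

lemma scaled_matrix_mult: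
  fixes A :: "'a::comm_semiring_1^'n^'m" and B :: "'a^'p^'n"
  shows "(\<chi> i j. a * A $ i $ j) ** (\<chi> i j. b * B $ i $ j) = (\<chi> i j. a * b * (A ** B) $ i $ j)"
  by (simp add: matrix_matrix_mult_def vec_eq_iff sum_distrib_left mult_ac)

lemma matrix_mult_scaled_middle:
  fixes A :: "'a::comm_semiring_1^'n^'m" and M :: "'a^'p^'n" and B :: "'a^'q^'p"
  shows "A ** (\<chi> i j. c * M $ i $ j) ** B = (\<chi> i j. c * (A ** M ** B) $ i $ j)"
  by (simp add: matrix_matrix_mult_def vec_eq_iff sum_distrib_left mult_ac)

lemma transpose_scaled: "transpose (\<chi> i j. c * M $ i $ j) = (\<chi> i j. c * transpose M $ i $ j)"
  by (simp add: transpose_def)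

lemma det_scaled:
  "det (\<chi> i j. c * M $ i $ j :: 'a::comm_ring_1^'n^'n) = c ^ CARD('n) * det M"
proof -
  have "(\<chi> i j. c * M $ i $ j) = mat c ** M"
    by (simp add: vec_eq_iff matrix_matrix_mult_def mat_def if_distrib if_distribR sum.delta
        cong: if_cong)
  then show ?thesis
    by (simp add: det_mul det_diagonal mat_def)
qed

lemma cone_SO4_imp_kron:
  assumes "M \<in> cone_SO4_pts"
  obtains A B where "quat ** M ** quat_inv = kron A B"
proof -
  obtain c M0 where M: "M = (\<chi> i j. c * M0 $ i $ j)" and "M0 \<in> SO4"
    using assms by (auto simp: cone_SO4_pts_def)
  then have "Q_orthogonal (quat ** M0 ** quat_inv)" "det (quat ** M0 ** quat_inv) = 1"
    by (simp_all add: SO4_def Q_orthogonal_quat_conj det_quat_conj)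
  then obtain A B where "quat ** M0 ** quat_inv = kron A B"
    by (rule Q_orthogonal_det_1_imp_kron)
  then have "quat ** M ** quat_inv = kron (\<chi> i j. c * A $ i $ j) B"
    by (simp add: M matrix_mult_scaled_middle kron_def vec_eq_iff mult.assoc)
  then show ?thesis by (rule that)
qed

lemma kron_in_cone_SO4:
  assumes "det A * det B \<noteq> 0"
  shows "quat_inv ** kron A B ** quat \<in> cone_SO4_pts"
proof -
  (* kron A B scales the determinant form by det A * det B; rescale by a square root of it. *)
  define \<delta> where "\<delta> = det A * det B"
  define M where "M = quat_inv ** kron A B ** quat"
  define c where "c = csqrt \<delta>"
  have c: "c\<^sup>2 = \<delta>" "c \<noteq> 0" "\<delta> \<noteq> 0"
    using assms by (auto simp: c_def \<delta>_def)
  have "transpose M ** M = transpose quat ** (transpose (kron A B) ** Qform ** kron A B) ** quat"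
    by (simp add: M_def Qform_eq matrix_transpose_mul matrix_mul_assoc)
  also have "\<dots> = (\<chi> i j. \<delta> * mat 1 $ i $ j)"
    by (simp add: transpose_kron_Qform_kron matrix_mult_scaled_middle transpose_quat_Qform_quat \<delta>_def)
  finally have MM: "transpose M ** M = (\<chi> i j. \<delta> * mat 1 $ i $ j)" .
  have "det M = \<delta>\<^sup>2"
    using det_quat_conj[of "kron A B"] quat_mult_quat_inv quat_inv_mult_quat
    by (simp add: M_def det_mul det_kron \<delta>_def) (metis det_I det_mul mult.commute)
  define M0 where "M0 = (\<chi> i j. (1 / c) * M $ i $ j)"
  have "det M0 = (1 / c) ^ CARD(4) * det M"
    unfolding M0_def by (rule det_scaled)
  also have "det M = c ^ 4"
    using \<open>det M = \<delta>\<^sup>2\<close> by (simp flip: c(1) power_mult)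
  finally have "det M0 = 1"
    using c(2) by (simp add: power_one_over)
  moreover have "transpose M0 ** M0 = (\<chi> i j. (1 / c) * (1 / c) * (transpose M ** M) $ i $ j)"
    unfolding M0_def transpose_scaled scaled_matrix_mult ..
  then have "transpose M0 ** M0 = mat 1"
    using c by (simp add: MM vec_eq_iff power2_eq_square)
  moreover have "M = (\<chi> i j. c * M0 $ i $ j)"
    using c by (simp add: M0_def vec_eq_iff)
  ultimately show ?thesis
    unfolding cone_SO4_pts_def SO4_def M_def by blast
qed

section \<open>Exponent vectors and their marginals\<close>

lemma sum_count_UNIV: "sum (count X) UNIV = size (X :: 'a::finite multiset)"
proof -
  have "sum (count X) UNIV = sum (count X) (set_mset X)"
    by (rule sum.mono_neutral_right) (simp_all add: not_in_iff)
  then show ?thesis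
    by (simp add: size_multiset_overloaded_eq)
qed

lemma count_image_multisets_of_size:
  "count ` multisets_of_size UNIV d = (exponents d :: ('i::finite \<Rightarrow> nat) set)"
proof (intro equalityI subsetI)
  fix \<alpha> :: "'i \<Rightarrow> nat"
  assume "\<alpha> \<in> count ` multisets_of_size UNIV d"
  then show "\<alpha> \<in> exponents d"
    unfolding multisets_of_size_def exponents_def using sum_count_UNIV by blast
next
  fix \<alpha> :: "'i \<Rightarrow> nat"
  assume \<alpha>: "\<alpha> \<in> exponents d"
  have count: "count (Abs_multiset \<alpha>) = \<alpha>"
    by (simp add: count_Abs_multiset)
  then have "size (Abs_multiset \<alpha>) = d"
    using \<alpha> sum_count_UNIV[of "Abs_multiset \<alpha>"] by (simp add: exponents_def)
  then show "\<alpha> \<in> count ` multisets_of_size UNIV d"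
    unfolding multisets_of_size_def by (intro image_eqI[of _ _ "Abs_multiset \<alpha>"]) (simp_all add: count)
qed

lemma card_exponents: "card (exponents d :: ('i::finite \<Rightarrow> nat) set) = (CARD('i) + d - 1) choose d"
proof -
  have "inj_on count (multisets_of_size UNIV d :: 'i multiset set)"
    by (simp add: inj_on_def multiset_eqI)
  then show ?thesis
    by (simp add: card_image count_image_multisets_of_size[symmetric] card_multisets_of_size)
qed

lemma finite_exponents: "finite (exponents d :: ('i::finite \<Rightarrow> nat) set)"
proof (rule card_ge_0_finite)
  have "CARD('i) > 0"
    by simp
  then have "d \<le> CARD('i) + d - 1"
    by linarith
  then show "card (exponents d :: ('i \<Rightarrow> nat) set) > 0"
    by (simp add: card_exponents)
qed

definition marginal :: "('p \<Rightarrow> 'c) \<Rightarrow> ('p \<Rightarrow> nat) \<Rightarrow> 'c \<Rightarrow> nat" where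
  "marginal f \<gamma> c = sum \<gamma> {p. f p = c}"

lemma sum_marginal:
  fixes \<gamma> :: "'p::finite \<Rightarrow> nat" and f :: "'p \<Rightarrow> 'c::finite"
  shows "sum (marginal f \<gamma>) UNIV = sum \<gamma> UNIV"
  using sum.group[of UNIV UNIV f \<gamma>] by (simp add: marginal_def)

lemma prod_power_marginal:
  fixes \<gamma> :: "'p::finite \<Rightarrow> nat" and f :: "'p \<Rightarrow> 'c::finite" and a :: "'c \<Rightarrow> 'a::comm_monoid_mult"
  shows "(\<Prod>p\<in>UNIV. a (f p) ^ \<gamma> p) = (\<Prod>c\<in>UNIV. a c ^ marginal f \<gamma> c)"
proof -
  have "(\<Prod>p\<in>UNIV. a (f p) ^ \<gamma> p) = (\<Prod>c\<in>UNIV. \<Prod>p\<in>{p\<in>UNIV. f p = c}. a (f p) ^ \<gamma> p)"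
    by (rule prod.group[symmetric]) auto
  also have "\<dots> = (\<Prod>c\<in>UNIV. a c ^ marginal f \<gamma> c)"
    by (simp add: marginal_def power_sum)
  finally show ?thesis .
qed

lemma marginal_fun_upd_Suc:
  fixes \<gamma> :: "'p::finite \<Rightarrow> nat"
  shows "marginal f (\<gamma>(p := Suc (\<gamma> p))) = (marginal f \<gamma>)(f p := Suc (marginal f \<gamma> (f p)))"
proof
  fix c
  have "marginal f (\<gamma>(p := Suc (\<gamma> p))) c
      = (if p \<in> {q. f q = c} then Suc (marginal f \<gamma> c) else marginal f \<gamma> c)"
    unfolding marginal_def by (rule sum_fun_upd_Suc) simp
  then show "marginal f (\<gamma>(p := Suc (\<gamma> p))) c = ((marginal f \<gamma>)(f p := Suc (marginal f \<gamma> (f p)))) c"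
    by auto
qed

lemma exists_with_marginals:
  fixes f :: "'p::finite \<Rightarrow> 'a::finite" and g :: "'p \<Rightarrow> 'b::finite"
  assumes "bij (\<lambda>p. (f p, g p))" and "sum \<beta> UNIV = sum \<beta>' UNIV"
  shows "\<exists>\<gamma>. marginal f \<gamma> = \<beta> \<and> marginal g \<gamma> = \<beta>'"
  using assms(2)
proof (induction "sum \<beta> UNIV" arbitrary: \<beta> \<beta>')
  case 0
  then have "\<beta> = 0" "\<beta>' = 0"
    by (simp_all add: fun_eq_iff)
  then show ?case
    by (intro exI[of _ 0]) (simp add: fun_eq_iff marginal_def)
next
  case (Suc n)
  have "\<beta> \<noteq> 0" "\<beta>' \<noteq> 0"
    using Suc.hyps(2) Suc.prems by auto
  then obtain k l where "\<beta> k > 0" "\<beta>' l > 0"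
    by (auto simp: fun_eq_iff)
  then obtain \<beta>1 \<beta>1' where \<beta>: "\<beta> = \<beta>1(k := Suc (\<beta>1 k))" and \<beta>': "\<beta>' = \<beta>1'(l := Suc (\<beta>1' l))"
    by (metis Suc_pred fun_upd_triv fun_upd_upd fun_upd_same)
  have "n = sum \<beta>1 UNIV" "sum \<beta>1 UNIV = sum \<beta>1' UNIV"
    using Suc.hyps(2) Suc.prems unfolding \<beta> \<beta>' sum_fun_upd_Suc[OF finite] by simp_all
  then obtain \<gamma> where \<gamma>: "marginal f \<gamma> = \<beta>1" "marginal g \<gamma> = \<beta>1'"
    using Suc.hyps(1) by blast
  obtain p where "f p = k" "g p = l"
    using assms(1) by (metis (no_types, lifting) bij_pointE prod.inject)
  then have "marginal f (\<gamma>(p := Suc (\<gamma> p))) = \<beta>" "marginal g (\<gamma>(p := Suc (\<gamma> p))) = \<beta>'"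
    by (simp_all add: marginal_fun_upd_Suc \<gamma> \<beta> \<beta>')
  then show ?case by blast
qed

section \<open>Linear independence of distinct powers\<close>

lemma base_expansion_unique:
  fixes a b :: "nat \<Rightarrow> nat"
  assumes "\<forall>n<m. a n < B" "\<forall>n<m. b n < B" "(\<Sum>n<m. a n * B ^ n) = (\<Sum>n<m. b n * B ^ n)"
  shows "\<forall>n<m. a n = b n"
  using assms
proof (induction m arbitrary: a b)
  case 0
  then show ?case by simp
next
  case (Suc m)
  have split: "(\<Sum>n<Suc m. c n * B ^ n) = c 0 + B * (\<Sum>n<m. c (Suc n) * B ^ n)" for c
    unfolding sum.lessThan_Suc_shift by (simp add: sum_distrib_left mult_ac)
  have eq: "a 0 + B * (\<Sum>n<m. a (Suc n) * B ^ n) = b 0 + B * (\<Sum>n<m. b (Suc n) * B ^ n)"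
    using Suc.prems(3) unfolding split .
  have "a 0 < B" "b 0 < B"
    using Suc.prems(1,2) by auto
  then have "a 0 = b 0"
    using arg_cong[OF eq, of "\<lambda>x. x mod B"] by simp
  moreover have "B > 0"
    using \<open>a 0 < B\<close> by simp
  ultimately have "(\<Sum>n<m. a (Suc n) * B ^ n) = (\<Sum>n<m. b (Suc n) * B ^ n)"
    using eq by simp
  moreover have "\<forall>n<m. a (Suc n) < B" "\<forall>n<m. b (Suc n) < B"
    using Suc.prems(1,2) by simp_all
  ultimately have "\<forall>n<m. a (Suc n) = b (Suc n)"
    using Suc.IH[of "\<lambda>n. a (Suc n)" "\<lambda>n. b (Suc n)"] by blast
  with \<open>a 0 = b 0\<close> show ?case
    by (metis Suc_less_eq not0_implies_Suc)
qed

lemma inj_on_base_expansion: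
  fixes idx :: "'i::finite \<Rightarrow> nat" and B :: nat
  assumes idx: "bij_betw idx UNIV {..<CARD('i)}"
  shows "inj_on (\<lambda>\<beta>. \<Sum>i\<in>UNIV. \<beta> i * B ^ idx i) {\<beta>. \<forall>i. \<beta> i < B}"
proof (rule inj_onI)
  fix \<beta> \<gamma> :: "'i \<Rightarrow> nat"
  assume "\<beta> \<in> {\<beta>. \<forall>i. \<beta> i < B}" "\<gamma> \<in> {\<beta>. \<forall>i. \<beta> i < B}"
    and eq: "(\<Sum>i\<in>UNIV. \<beta> i * B ^ idx i) = (\<Sum>i\<in>UNIV. \<gamma> i * B ^ idx i)"
  define inv_idx where "inv_idx = the_inv_into UNIV idx"
  have inv_idx: "inv_idx (idx i) = i" for i
    using idx by (simp add: inv_idx_def bij_betw_def the_inv_into_f_f)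
  have expand: "(\<Sum>i\<in>UNIV. \<delta> i * B ^ idx i) = (\<Sum>n<CARD('i). \<delta> (inv_idx n) * B ^ n)" for \<delta>
    using sum.reindex_bij_betw[OF idx, of "\<lambda>n. \<delta> (inv_idx n) * B ^ n"] by (simp add: inv_idx)
  have "\<forall>n<CARD('i). \<beta> (inv_idx n) = \<gamma> (inv_idx n)"
    by (rule base_expansion_unique) (use eq \<open>\<beta> \<in> _\<close> \<open>\<gamma> \<in> _\<close> in \<open>simp_all add: expand\<close>)
  moreover have "idx i < CARD('i)" for i
    using idx by (auto simp: bij_betw_def)
  ultimately show "\<beta> = \<gamma>"
    by (metis inv_idx ext)
qed

lemma inj_on_base_expansion_Plus:
  fixes idx :: "'a::finite + 'b::finite \<Rightarrow> nat" and B :: nat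
  assumes inj: "inj_on (\<lambda>\<delta>. \<Sum>s\<in>UNIV. \<delta> s * B ^ idx s) {\<delta>. \<forall>s. \<delta> s < B}"
    and bound: "\<And>m c c'. m \<in> K \<Longrightarrow> fst m c < B \<and> snd m c' < B"
  shows "inj_on (\<lambda>m. (\<Sum>c\<in>UNIV. fst m c * B ^ idx (Inl c)) + (\<Sum>c\<in>UNIV. snd m c * B ^ idx (Inr c))) K"
proof -
  have eq: "(\<lambda>m. (\<Sum>c\<in>UNIV. fst m c * B ^ idx (Inl c)) + (\<Sum>c\<in>UNIV. snd m c * B ^ idx (Inr c)))
      = (\<lambda>\<delta>. \<Sum>s\<in>UNIV. \<delta> s * B ^ idx s) \<circ> (\<lambda>m. case_sum (fst m) (snd m))"
    by (simp add: fun_eq_iff sum.Plus flip: UNIV_Plus_UNIV)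
  have "inj (\<lambda>m. case_sum (fst m) (snd m) :: 'a + 'b \<Rightarrow> nat)"
  proof (rule injI)
    fix m m' :: "('a \<Rightarrow> nat) \<times> ('b \<Rightarrow> nat)"
    assume eq: "case_sum (fst m) (snd m) = case_sum (fst m') (snd m')"
    have "fst m c = fst m' c" "snd m c' = snd m' c'" for c c'
      using fun_cong[OF eq, of "Inl c"] fun_cong[OF eq, of "Inr c'"] by simp_all
    then show "m = m'"
      by (simp add: prod_eq_iff fun_eq_iff)
  qed
  moreover have "(\<lambda>m. case_sum (fst m) (snd m)) ` K \<subseteq> {\<delta>. \<forall>s. \<delta> s < B}"
    using bound by (auto split: sum.split)
  ultimately show ?thesis
    unfolding eq by (intro comp_inj_on inj_on_subset[OF inj]) (auto intro: inj_on_subset)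
qed

lemma base_expansion_pair_sums_distinct:
  fixes idx :: "'i::finite \<Rightarrow> nat" and B :: nat
  assumes inj: "inj_on (\<lambda>\<delta>. \<Sum>s\<in>UNIV. \<delta> s * B ^ idx s) {\<delta>. \<forall>s. \<delta> s < B}"
    and "B \<ge> 2" "a \<noteq> b" "c \<noteq> e" "a \<noteq> c" "a \<noteq> e"
  shows "B ^ idx a + B ^ idx b \<noteq> B ^ idx c + B ^ idx e"
proof
  define ind :: "'i \<Rightarrow> 'i \<Rightarrow> 'i \<Rightarrow> nat"
    where "ind x y s = (if s = x then 1 else 0) + (if s = y then 1 else 0)" for x y s
  have sum_ind: "(\<Sum>s\<in>UNIV. ind x y s * B ^ idx s) = B ^ idx x + B ^ idx y" for x y
  proof -
    have "ind x y s * B ^ idx s = (if s = x then B ^ idx s else 0) + (if s = y then B ^ idx s else 0)" for s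
      by (simp add: ind_def)
    then show ?thesis
      by (simp add: sum.distrib)
  qed
  have ind_in: "ind x y \<in> {\<delta>. \<forall>s. \<delta> s < B}" if "x \<noteq> y" for x y
    using that \<open>B \<ge> 2\<close> by (auto simp: ind_def)
  assume "B ^ idx a + B ^ idx b = B ^ idx c + B ^ idx e"
  then have "ind a b = ind c e"
    by (intro inj_onD[OF inj] ind_in assms(3,4)) (simp add: sum_ind)
  then have "ind a b a = ind c e a"
    by simp
  then show False
    using assms(5,6) by (simp add: ind_def)
qed

lemma of_nat_power_inject:
  assumes "t \<ge> 2"
  shows "(of_nat t :: complex) ^ x = of_nat t ^ y \<longleftrightarrow> x = y"
proof -
  have "(of_nat t :: complex) ^ x = of_nat t ^ y \<longleftrightarrow> t ^ x = t ^ y"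
    by (metis of_nat_eq_iff of_nat_power)
  also have "\<dots> \<longleftrightarrow> x = y"
    using assms by simp
  finally show ?thesis .
qed

lemma sum_power_values_eq_0_imp_coeffs_eq_0:
  fixes u :: "'k \<Rightarrow> complex" and e :: "'k \<Rightarrow> nat"
  assumes "finite K" "inj_on e K"
    and zero: "\<And>t::nat. t \<ge> 2 \<Longrightarrow> (\<Sum>k\<in>K. u k * of_nat t ^ e k) = 0"
  shows "\<forall>k\<in>K. u k = 0"
proof -
  define q where "q = (\<Sum>k\<in>K. monom (u k) (e k))"
  have poly_q: "poly q x = (\<Sum>k\<in>K. u k * x ^ e k)" for x
    by (simp add: q_def poly_sum poly_monom)
  have "q = 0"
  proof (rule ccontr)
    assume "q \<noteq> 0"
    then have "finite {x. poly q x = 0}"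
      by (rule poly_roots_finite)
    moreover have "of_nat ` {2..} \<subseteq> {x :: complex. poly q x = 0}"
      using zero poly_q by auto
    moreover have "infinite (of_nat ` {2::nat..} :: complex set)"
      using infinite_Ici[of "2::nat"] by (auto dest: finite_imageD simp: inj_on_def)
    ultimately show False
      by (meson finite_subset)
  qed
  show ?thesis
  proof
    fix k0 assume "k0 \<in> K"
    have "coeff q (e k0) = (\<Sum>k\<in>K. if e k = e k0 then u k else 0)"
      by (simp add: q_def coeff_sum)
    also have "\<dots> = (\<Sum>k\<in>K. if k = k0 then u k else 0)"
      using assms(2) \<open>k0 \<in> K\<close> by (intro sum.cong) (auto simp: inj_on_def)
    also have "\<dots> = u k0"
      using assms(1) \<open>k0 \<in> K\<close> by simp
    finally show "u k0 = 0"
      using \<open>q = 0\<close> by simp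
  qed
qed

lemma fun_vs_independent_if_power_values:
  fixes f :: "'k \<Rightarrow> 'v \<Rightarrow> complex" and P :: "nat \<Rightarrow> 'v" and e :: "'k \<Rightarrow> nat"
  assumes fin: "finite K" and inj: "inj_on e K"
    and f_at_P: "\<And>k t. k \<in> K \<Longrightarrow> t \<ge> 2 \<Longrightarrow> f k (P t) = of_nat t ^ e k"
  shows "inj_on f K" and "fun_vs.independent (f ` K)"
proof -
  show inj_f: "inj_on f K"
  proof (rule inj_onI)
    fix k l assume "k \<in> K" "l \<in> K" "f k = f l"
    then have "e k = e l"
      using f_at_P[of k 2] f_at_P[of l 2] of_nat_power_inject[of 2] by simp
    then show "k = l"
      using inj \<open>k \<in> K\<close> \<open>l \<in> K\<close> by (auto simp: inj_on_def)
  qed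
  show "fun_vs.independent (f ` K)"
  proof
    assume "fun_vs.dependent (f ` K)"
    then obtain u where u: "\<exists>g\<in>f ` K. u g \<noteq> 0" and sum: "(\<Sum>g\<in>f ` K. (\<lambda>x. u g * g x)) = 0"
      using fin unfolding fun_vs.dependent_finite[OF finite_imageI[OF fin]] by blast
    have "(\<Sum>k\<in>K. u (f k) * of_nat t ^ e k) = 0" if "t \<ge> 2" for t
    proof -
      have "(\<Sum>k\<in>K. u (f k) * of_nat t ^ e k) = (\<Sum>k\<in>K. u (f k) * f k (P t))"
        using that by (intro sum.cong) (simp_all add: f_at_P)
      also have "\<dots> = (\<Sum>g\<in>f ` K. (\<lambda>x. u g * g x)) (P t)"
        by (simp add: sum_fun_apply sum.reindex[OF inj_f])
      finally show ?thesis
        by (simp add: sum)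
    qed
    then have "\<forall>k\<in>K. u (f k) = 0"
      by (rule sum_power_values_eq_0_imp_coeffs_eq_0[OF fin inj])
    with u show False
      by blast
  qed
qed

section \<open>The Hilbert function of the cone\<close>

definition quat_coord :: "4 \<times> 4 \<Rightarrow> complex^4^4 \<Rightarrow> complex" where
  "quat_coord p M = entry p (quat ** M ** quat_inv)"

definition marginals :: "(4 \<times> 4 \<Rightarrow> nat) \<Rightarrow> (2 \<times> 2 \<Rightarrow> nat) \<times> (2 \<times> 2 \<Rightarrow> nat)" where
  "marginals \<gamma> = (marginal (map_prod hi hi) \<gamma>, marginal (map_prod lo lo) \<gamma>)"

lemma entry_kron: "entry p (kron A B) = entry (map_prod hi hi p) A * entry (map_prod lo lo p) B"
  by (simp add: entry_def kron_def map_prod_def split_beta)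

lemma monomial_quat_coord_kron:
  assumes "quat ** M ** quat_inv = kron A B"
  shows "monomial quat_coord \<gamma> M = monomial entry (fst (marginals \<gamma>)) A * monomial entry (snd (marginals \<gamma>)) B"
proof -
  have "monomial quat_coord \<gamma> M
      = (\<Prod>p\<in>UNIV. entry (map_prod hi hi p) A ^ \<gamma> p) * (\<Prod>p\<in>UNIV. entry (map_prod lo lo p) B ^ \<gamma> p)"
    by (simp add: monomial_def quat_coord_def assms entry_kron power_mult_distrib prod.distrib)
  then show ?thesis
    using prod_power_marginal[where a = "\<lambda>c. entry c A" and f = "map_prod hi hi" and \<gamma> = \<gamma>]
      prod_power_marginal[where a = "\<lambda>c. entry c B" and f = "map_prod lo lo" and \<gamma> = \<gamma>]
    by (simp add: monomial_def marginals_def)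
qed

lemma restrict0_monomial_quat_coord_eq:
  assumes "marginals \<gamma> = marginals \<gamma>'"
  shows "restrict0 cone_SO4_pts (monomial quat_coord \<gamma>) = restrict0 cone_SO4_pts (monomial quat_coord \<gamma>')"
proof
  fix M
  show "restrict0 cone_SO4_pts (monomial quat_coord \<gamma>) M = restrict0 cone_SO4_pts (monomial quat_coord \<gamma>') M"
  proof (cases "M \<in> cone_SO4_pts")
    case True
    then obtain A B where "quat ** M ** quat_inv = kron A B"
      by (rule cone_SO4_imp_kron)
    then show ?thesis
      by (simp add: restrict0_def monomial_quat_coord_kron assms)
  qed (simp add: restrict0_def)
qed

lemma marginals_image: "marginals ` exponents d = exponents d \<times> exponents d"
proof (intro equalityI subsetI)
  fix m assume "m \<in> marginals ` exponents d"
  then show "m \<in> exponents d \<times> exponents d"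
    by (auto simp: marginals_def exponents_def sum_marginal)
next
  fix m :: "(2 \<times> 2 \<Rightarrow> nat) \<times> (2 \<times> 2 \<Rightarrow> nat)"
  assume "m \<in> exponents d \<times> exponents d"
  then have "sum (fst m) UNIV = sum (snd m) UNIV"
    by (auto simp: exponents_def)
  then obtain \<gamma> where "marginal (map_prod hi hi) \<gamma> = fst m" "marginal (map_prod lo lo) \<gamma> = snd m"
    using exists_with_marginals[OF bij_hi_lo] by blast
  moreover from this have "\<gamma> \<in> exponents d"
    using \<open>m \<in> _\<close> sum_marginal[of "map_prod hi hi" \<gamma>] by (auto simp: exponents_def)
  ultimately show "m \<in> marginals ` exponents d"
    by (auto simp: marginals_def image_iff intro!: bexI[of _ \<gamma>])
qed

lemma monomial_entry_power_matrix:
  fixes z :: complex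
  shows "monomial entry \<beta> (\<chi> i j. z ^ w (i, j)) = z ^ (\<Sum>c\<in>UNIV. \<beta> c * w c)"
  by (simp add: monomial_def entry_def power_sum case_prod_unfold mult.commute flip: power_mult)

lemma det_power_matrix:
  fixes z :: complex
  shows "det (\<chi> i j. z ^ w (i, j) :: complex^2^2) = z ^ (w (1, 1) + w (2, 2)) - z ^ (w (1, 2) + w (2, 1))"
  by (simp add: det_2 power_add)

lemma quat_conj_quat_inv_conj: "quat ** (quat_inv ** K ** quat) ** quat_inv = K"
  by (simp add: matrix_mul_assoc quat_mult_quat_inv) (simp flip: matrix_mul_assoc add: quat_mult_quat_inv)

lemma cone_SO4_test_curve:
  obtains enc :: "(2 \<times> 2 \<Rightarrow> nat) \<times> (2 \<times> 2 \<Rightarrow> nat) \<Rightarrow> nat" and P :: "nat \<Rightarrow> complex^4^4"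
  where "inj_on enc (exponents d \<times> exponents d)"
    and "\<forall>t\<ge>2. P t \<in> cone_SO4_pts"
    and "\<forall>\<gamma> t. monomial quat_coord \<gamma> (P t) = of_nat t ^ enc (marginals \<gamma>)"
proof -
  (* Entries t^(B^k) with B > d: the exponent of t in a monomial is then the base B expansion
     of its pair of marginals. *)
  define B where "B = d + 2"
  obtain idx :: "(2 \<times> 2) + (2 \<times> 2) \<Rightarrow> nat" where idx: "bij_betw idx UNIV {..<CARD((2 \<times> 2) + (2 \<times> 2))}"
    using ex_bij_betw_finite_nat[of "UNIV :: ((2 \<times> 2) + (2 \<times> 2)) set"] by (auto simp: atLeast0LessThan)
  have inj: "inj_on (\<lambda>\<delta>. \<Sum>s\<in>UNIV. \<delta> s * B ^ idx s) {\<delta>. \<forall>s. \<delta> s < B}"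
    by (rule inj_on_base_expansion[OF idx])
  define wA where "wA c = B ^ idx (Inl c)" for c
  define wB where "wB c = B ^ idx (Inr c)" for c
  define enc where "enc m = (\<Sum>c\<in>UNIV. fst m c * wA c) + (\<Sum>c\<in>UNIV. snd m c * wB c)"
    for m :: "(2 \<times> 2 \<Rightarrow> nat) \<times> (2 \<times> 2 \<Rightarrow> nat)"
  define T :: "(2 \<times> 2 \<Rightarrow> nat) \<Rightarrow> nat \<Rightarrow> complex^2^2"
    where "T w t = (\<chi> i j. of_nat t ^ w (i, j))" for w t
  define P where "P t = quat_inv ** kron (T wA t) (T wB t) ** quat" for t
  show ?thesis
  proof (rule that)
    have "fst m c < B" "snd m c < B" if "m \<in> exponents d \<times> exponents d" for m c
      using that member_le_sum[of c UNIV "fst m"] member_le_sum[of c UNIV "snd m"]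
      by (auto simp: exponents_def B_def)
    then show "inj_on enc (exponents d \<times> exponents d)"
      unfolding enc_def wA_def wB_def by (intro inj_on_base_expansion_Plus[OF inj]) blast
  next
    have "B \<ge> 2"
      by (simp add: B_def)
    have "wA (1, 1) + wA (2, 2) \<noteq> wA (1, 2) + wA (2, 1)" "wB (1, 1) + wB (2, 2) \<noteq> wB (1, 2) + wB (2, 1)"
      unfolding wA_def wB_def by (rule base_expansion_pair_sums_distinct[OF inj \<open>B \<ge> 2\<close>]; simp)+
    then have "det (T wA t) \<noteq> 0 \<and> det (T wB t) \<noteq> 0" if "t \<ge> 2" for t
      using that by (simp add: T_def det_power_matrix of_nat_power_inject)
    then show "\<forall>t\<ge>2. P t \<in> cone_SO4_pts"
      unfolding P_def by (auto intro: kron_in_cone_SO4)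
  next
    show "\<forall>\<gamma> t. monomial quat_coord \<gamma> (P t) = of_nat t ^ enc (marginals \<gamma>)"
      unfolding P_def using monomial_quat_coord_kron[OF quat_conj_quat_inv_conj]
      by (simp add: T_def monomial_entry_power_matrix enc_def power_add)
  qed
qed

theorem hilbert_fun_cone_SO4: "hilbert_fun cone_SO4_pts d = ((d + 3) choose d)\<^sup>2"
proof -
  let ?C = cone_SO4_pts and ?E = "exponents d :: (4 \<times> 4 \<Rightarrow> nat) set"
  let ?K = "exponents d \<times> exponents d :: ((2 \<times> 2 \<Rightarrow> nat) \<times> (2 \<times> 2 \<Rightarrow> nat)) set"
  define g where "g m = restrict0 ?C (monomial quat_coord (inv_into ?E marginals m))" for m
  have marginals_inv: "marginals (inv_into ?E marginals m) = m" if "m \<in> ?K" for m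
    using that by (simp add: f_inv_into_f flip: marginals_image)
  have "restrict0 ?C (monomial quat_coord \<gamma>) = g (marginals \<gamma>)" if "\<gamma> \<in> ?E" for \<gamma>
  proof -
    have "marginals \<gamma> \<in> ?K"
      using that marginals_image by blast
    then show ?thesis
      unfolding g_def by (intro restrict0_monomial_quat_coord_eq) (simp add: marginals_inv)
  qed
  then have image_eq: "restrict0 ?C ` monomial quat_coord ` ?E = g ` ?K"
    by (simp add: image_image flip: marginals_image)
  obtain enc P where enc: "inj_on enc ?K" and P: "\<forall>t\<ge>2. P t \<in> ?C"
    and P_values: "\<forall>\<gamma> t. monomial quat_coord \<gamma> (P t) = of_nat t ^ enc (marginals \<gamma>)"
    by (rule cone_SO4_test_curve[of d])
  have "g m (P t) = of_nat t ^ enc m" if "m \<in> ?K" "t \<ge> 2" for m t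
    using that by (simp add: g_def restrict0_def P P_values marginals_inv)
  then have "inj_on g ?K" "fun_vs.independent (g ` ?K)"
    using fun_vs_independent_if_power_values[OF finite_SigmaI[OF finite_exponents finite_exponents] enc]
    by blast+
  have "hilbert_fun ?C d = fun_vs.dim (restrict0 ?C ` monomial quat_coord ` ?E)"
    unfolding quat_coord_def[abs_def]
    by (rule hilbert_fun_conjugate_coordinates[OF quat_mult_quat_inv quat_inv_mult_quat])
  also have "\<dots> = card ?K"
    unfolding image_eq using \<open>inj_on g ?K\<close> \<open>fun_vs.independent (g ` ?K)\<close>
    by (simp add: fun_vs.dim_eq_card_independent card_image)
  also have "\<dots> = ((d + 3) choose d)\<^sup>2"
    by (simp add: card_cartesian_product card_exponents power2_eq_square numeral_3_eq_3)
  finally show ?thesis .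
qed

section \<open>The Hilbert series\<close>

lemma of_nat_choose_plus_3:
  "(of_nat ((n + 3) choose n) :: rat) = (of_nat n + 1) * (of_nat n + 2) * (of_nat n + 3) / 6"
proof -
  have "(of_nat ((n + 3) choose n) :: rat) = fact (n + 3) / (fact n * fact 3)"
    by (subst binomial_fact) auto
  also have "\<dots> = (of_nat n + 1) * (of_nat n + 2) * (of_nat n + 3) / 6"
    by (simp add: eval_nat_numeral fact_Suc field_simps)
  finally show ?thesis .
qed

lemma fps_times_one_minus_X_power_7:
  fixes H :: "rat fps"
  shows "H * (1 - fps_X) ^ 7 = H - fps_const 7 * (fps_X ^ 1 * H) + fps_const 21 * (fps_X ^ 2 * H)
    - fps_const 35 * (fps_X ^ 3 * H) + fps_const 35 * (fps_X ^ 4 * H) - fps_const 21 * (fps_X ^ 5 * H)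
    + fps_const 7 * (fps_X ^ 6 * H) - fps_X ^ 7 * H"
  by (simp only: numeral_fps_const[symmetric]) algebra

lemma fps_nth_numerator:
  "fps_nth (1 + 9 * fps_X + 9 * fps_X ^ 2 + fps_X ^ 3 :: rat fps) n =
     (if n = 0 then 1 else if n = 1 then 9 else if n = 2 then 9 else if n = 3 then 1 else 0)"
  by (simp add: numeral_fps_const fps_X_power_nth fps_X_nth)

lemma squared_tetrahedral_series_times_one_minus_X_power_7:
  "Abs_fps (\<lambda>n. of_nat (((n + 3) choose n)\<^sup>2)) * (1 - fps_X) ^ 7
     = (1 + 9 * fps_X + 9 * fps_X ^ 2 + fps_X ^ 3 :: rat fps)"
proof (rule fps_ext)
  fix n
  define h :: "nat \<Rightarrow> rat" where "h n = of_nat (((n + 3) choose n)\<^sup>2)" for n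
  have h: "h n = ((of_nat n + 1) * (of_nat n + 2) * (of_nat n + 3) / 6)\<^sup>2" for n
    by (simp add: h_def of_nat_choose_plus_3)
  have lhs: "fps_nth (Abs_fps h * (1 - fps_X) ^ 7) n =
     h n - 7 * (if n < 1 then 0 else h (n - 1)) + 21 * (if n < 2 then 0 else h (n - 2))
     - 35 * (if n < 3 then 0 else h (n - 3)) + 35 * (if n < 4 then 0 else h (n - 4))
     - 21 * (if n < 5 then 0 else h (n - 5)) + 7 * (if n < 6 then 0 else h (n - 6))
     - (if n < 7 then 0 else h (n - 7))"
    unfolding fps_times_one_minus_X_power_7 fps_sub_nth fps_add_nth fps_mult_left_const_nth
      fps_X_power_mult_nth by simp
  show "fps_nth (Abs_fps (\<lambda>n. of_nat (((n + 3) choose n)\<^sup>2)) * (1 - fps_X) ^ 7) n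
      = fps_nth (1 + 9 * fps_X + 9 * fps_X ^ 2 + fps_X ^ 3 :: rat fps) n"
  proof (cases "n \<ge> 7")
    case True
    then obtain m where "n = m + 7"
      by (metis add.commute le_add_diff_inverse)
    then show ?thesis
      unfolding h_def[symmetric] lhs fps_nth_numerator by (simp add: h eval_nat_numeral field_simps)
  next
    case False
    then have "n \<in> {0, 1, 2, 3, 4, 5, 6}"
      by auto
    then show ?thesis
      unfolding h_def[symmetric] lhs fps_nth_numerator by (auto simp: h)
  qed
qed

theorem theorem4p4:
  shows "hilbert_series cone_SO4_pts =
    (1 + 9 * fps_X + 9 * fps_X ^ 2 + fps_X ^ 3) / (1 - fps_X) ^ 7"
proof -
  have "hilbert_series cone_SO4_pts = Abs_fps (\<lambda>n. of_nat (((n + 3) choose n)\<^sup>2))"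
    by (simp add: hilbert_series_def hilbert_fun_cone_SO4)
  moreover have "(1 - fps_X :: rat fps) ^ 7 \<noteq> 0"
    by simp
  ultimately show ?thesis
    by (simp flip: squared_tetrahedral_series_times_one_minus_X_power_7)
qed

end
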